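(* Let $f:\mathbb{R}^n\to\mathbb{R}$, $g:\mathbb{R}^m\to\mathbb{R}$, $Q:\mathbb{R}^n\times\mathbb{R}^m\to\mathbb{R}\cup\{+\infty\}$ and $L(x,y)=f(x)+Q(x,y)+g(y)$ satisfy: (A1) $L$ is bounded below; $f,g$ are continuously differentiable with $\nabla f$, $\nabla g$ Lipschitz continuous with constants $L_{\nabla f}$, $L_{\nabla g}$; $Q$ is proper and lower semicontinuous; $\phi_1:\mathbb{R}^n\to\mathbb{R}$, $\phi_2:\mathbb{R}^m\to\mathbb{R}$ are differentiable, $\phi_i$ is $\theta_i$-strongly convex with $\theta_1>L_{\nabla f}$, $\theta_2>L_{\nabla g}$, and $\nabla\phi_i$ is $\eta_i$-Lipschitz continuous ($i=1,2$); (A2) $L$ is coercive and $\mathrm{dom}\,Q$ is closed; for all $(x,y)\in\mathrm{dom}\,Q$, $\partial_xQ(x,y)\times\partial_yQ(x,y)\subset\partial Q(x,y)$; and $Q(x,y)=q(x,y)+h(x)$, where $h:\mathbb{R}^n\to\mathbb{R}\cup\{+\infty\}$ is continuous on its domain, $q:\mathbb{R}^n\times\mathbb{R}^m\to\mathbb{R}\cup\{+\infty\}$ is continuous on $\mathrm{dom}\,Q$, for every $y$ the partial function $q(\cdot,y)$ is continuously differentiable, and for each bounded subset $D_1\times D_2\subset\mathrm{dom}\,Q$ there exists $\xi>0$ such that $\|\nabla_xq(\bar x,y)-\nabla_xq(\bar x,\bar y)\|\le\xi\|y-\bar y\|$ for all $\bar x\in D_1$, $y,\bar y\in D_2$. Let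 $\{(x_k,y_k)\}$ and $\{(\hat x_k,\hat y_k)\}$ be sequences generated by the following algorithm: choose $(x_0,y_0)\in\mathbb{R}^n\times\mathbb{R}^m$, set $(\hat x_0,\hat y_0)=(x_0,y_0)$, choose $\alpha_{\max},\beta_{\max}\ge0$ with $\alpha_{\max}+\beta_{\max}<1$ and $\alpha_k\in[0,\alpha_{\max}]$, $\beta_k\in[0,\beta_{\max}]$; for $k=0,1,\dots$: 1. $x_{k+1}\in\arg\min_{x}\{Q(x,\hat y_k)+\langle\nabla f(\hat x_k),x\rangle+D_{\phi_1}(x,\hat x_k)\}$, $y_{k+1}\in\arg\min_{y}\{Q(x_{k+1},y)+\langle\nabla g(\hat y_k),y\rangle+D_{\phi_2}(y,\hat y_k)\}$; 2. $u_{k+1}=x_{k+1}+\alpha_k(x_{k+1}-x_k)+\beta_k(x_k-x_{k-1})$, $v_{k+1}=y_{k+1}+\alpha_k(y_{k+1}-y_k)+\beta_k(y_k-y_{k-1})$; 3. if $L(u_{k+1},v_{k+1})\le L(x_{k+1},y_{k+1})$ then $(\hat x_{k+1},\hat y_{k+1})=(u_{k+1},v_{k+1})$, else $(\hat x_{k+1},\hat y_{k+1})=(x_{k+1},y_{k+1})$. For any integer $k\ge1$ set $q_x^{k+1}=\nabla f(x_{k+1})-\nabla f(\hat x_k)-\nabla\phi_1(x_{k+1})+\nabla\phi_1(\hat x_k)$, $p_x^{k+1}=\nabla_xq(x_{k+1},y_{k+1})-\nabla_xq(x_{k+1},\hat y_k)+q_x^{k+1}$, $p_y^{k+1}=\nabla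 g(y_{k+1})-\nabla g(\hat y_k)-\nabla\phi_2(y_{k+1})+\nabla\phi_2(\hat y_k)$. Then $(p_x^{k+1},p_y^{k+1})\in\partial L(x_{k+1},y_{k+1})$, and there exists $\varrho>0$ such that $\|(p_x^{k+1},p_y^{k+1})\|\le\varrho\|(x_{k+1}-\hat x_k,y_{k+1}-\hat y_k)\|$.
   Context: For a convex differentiable $\phi$, $D_\phi(x,y)=\phi(x)-\phi(y)-\langle\nabla\phi(y),x-y\rangle$ (Bregman distance). $\phi$ is $\theta$-strongly convex if $\phi-\frac\theta2\|\cdot\|^2$ is convex. For a proper lsc $F$, the Fréchet subdifferential $\hat\partial F(x)$ is the set of $v$ with $\liminf_{y\to x}\frac{F(y)-F(x)-\langle v,y-x\rangle}{\|y-x\|}\ge0$ (empty if $x\notin\mathrm{dom}F$), and the (limiting) subdifferential is $\partial F(x)=\{v:\exists x_k\to x, F(x_k)\to F(x), v_k\in\hat\partial F(x_k), v_k\to v\}$. $\partial_xQ(x,y)$ and $\partial_yQ(x,y)$ denote the limiting subdifferentials of $Q(\cdot,y)$ at $x$ and of $Q(x,\cdot)$ at $y$. $(x_{-1},y_{-1})$ in step 2 is a given initial point (e.g. $(x_0,y_0)$). *)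

theory Defs
  imports "HOL-Analysis.Analysis"
begin

text \<open>Extended-real valued functions on Euclidean spaces: values in ereal
  (the value +infinity encodes points outside the effective domain).\<close>

definition edom :: "('a \<Rightarrow> ereal) \<Rightarrow> 'a set" where
  "edom F = {x. F x < \<infinity>}"

definition proper_fun :: "('a \<Rightarrow> ereal) \<Rightarrow> bool" where
  "proper_fun F \<longleftrightarrow> (\<forall>x. F x \<noteq> -\<infinity>) \<and> (\<exists>x. F x < \<infinity>)"

definition lsc_fun :: "('a::topological_space \<Rightarrow> ereal) \<Rightarrow> bool" where
  "lsc_fun F \<longleftrightarrow> (\<forall>x. F x \<le> Liminf (at x) F)"

definition frechet_subdiff :: "('a::real_inner \<Rightarrow> ereal) \<Rightarrow> 'a \<Rightarrow> 'a set" where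
  "frechet_subdiff F x = {v. F x < \<infinity> \<and>
      Liminf (at x) (\<lambda>y. (F y - F x - ereal (inner v (y - x))) / ereal (norm (y - x))) \<ge> 0}"

definition limiting_subdiff :: "('a::real_inner \<Rightarrow> ereal) \<Rightarrow> 'a \<Rightarrow> 'a set" where
  "limiting_subdiff F x = {v. \<exists>xs vs. xs \<longlonglongrightarrow> x \<and> (\<lambda>k. F (xs k)) \<longlonglongrightarrow> F x \<and>
      (\<forall>k. vs k \<in> frechet_subdiff F (xs k)) \<and> vs \<longlonglongrightarrow> v}"

definition strongly_convex :: "real \<Rightarrow> ('a::real_normed_vector \<Rightarrow> real) \<Rightarrow> bool" where
  "strongly_convex \<theta> \<phi> \<longleftrightarrow> convex_on UNIV (\<lambda>x. \<phi> x - \<theta> / 2 * (norm x)\<^sup>2)"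

definition bregman :: "('a::real_inner \<Rightarrow> real) \<Rightarrow> ('a \<Rightarrow> 'a) \<Rightarrow> 'a \<Rightarrow> 'a \<Rightarrow> real" where
  "bregman \<phi> \<phi>' x y = \<phi> x - \<phi> y - inner (\<phi>' y) (x - y)"

end

(* At a minimiser of a function plus a smooth term, Fermat's rule and the smooth sum rule
   for Frechet subgradients turn the optimality conditions of the two Bregman steps into
   subgradients of the partial functions Q(., y_{k+1}) and Q(x_{k+1}, .); the coupling
   term q is smooth in x, which lets one pass from \hat y_k to y_{k+1} in the first one.
   Adding the gradients of f and g then yields (p_x, p_y) in the limiting subdifferential
   of L. For the estimate, the Lipschitz constants of the gradients bound every term of
   (p_x, p_y) except the q-difference, whose constant xi exists only on bounded subsets
   of dom Q. The iterates stay in a bounded sublevel set of the coercive L, because the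
   descent lemma and strong convexity (theta > Lipschitz constant) make every Bregman
   step decrease L, and the extrapolation step is accepted only when it does not
   increase L. *)

theory Submission
  imports Defs
begin

lemma ereal_less_diff_divide_iff:
  fixes Fy :: ereal
  assumes n: "n > 0"
  shows "ereal c < (Fy - ereal r - ereal t) / ereal n \<longleftrightarrow> ereal (r + t + c * n) < Fy"
proof (cases Fy)
  case (real s)
  have "c < (s - r - t) / n \<longleftrightarrow> c * n < s - r - t" using n by (simp add: field_simps)
  then show ?thesis using real n by (simp add: algebra_simps)
qed (use n in auto)

lemma frechet_subdiff_iff:
  fixes F :: "'a::real_inner \<Rightarrow> ereal"
  assumes Fx: "F x = ereal r"
  shows "v \<in> frechet_subdiff F x \<longleftrightarrow>
    (\<forall>e>0. eventually (\<lambda>y. ereal (r + inner v (y - x) - e * norm (y - x)) \<le> F y) (at x))"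
proof -
  have neq: "eventually (\<lambda>y. y \<noteq> x) (at x)" by (simp add: eventually_at_filter)
  have "v \<in> frechet_subdiff F x \<longleftrightarrow>
      (\<forall>z<0. eventually (\<lambda>y. z < (F y - F x - ereal (inner v (y - x))) / ereal (norm (y - x))) (at x))"
    unfolding frechet_subdiff_def using Fx by (simp add: le_Liminf_iff)
  also have "\<dots> \<longleftrightarrow>
      (\<forall>e>0. eventually (\<lambda>y. ereal (r + inner v (y - x) - e * norm (y - x)) \<le> F y) (at x))"
  proof safe
    fix e :: real assume e: "e > 0"
    assume "\<forall>z<0. eventually (\<lambda>y. z < (F y - F x - ereal (inner v (y - x))) / ereal (norm (y - x))) (at x)"
    then have "eventually (\<lambda>y. ereal (-e) < (F y - F x - ereal (inner v (y - x))) / ereal (norm (y - x))) (at x)"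
      using e by simp
    with neq show "eventually (\<lambda>y. ereal (r + inner v (y - x) - e * norm (y - x)) \<le> F y) (at x)"
    proof eventually_elim
      case (elim y)
      then have "norm (y - x) > 0" by simp
      with elim show ?case using ereal_less_diff_divide_iff[of "norm (y - x)" "-e" "F y" r "inner v (y - x)"] Fx
        by (simp add: algebra_simps)
    qed
  next
    fix z :: ereal assume z: "z < 0"
    assume H: "\<forall>e>0. eventually (\<lambda>y. ereal (r + inner v (y - x) - e * norm (y - x)) \<le> F y) (at x)"
    obtain c where c: "z < ereal c" "c < 0"
      using ereal_dense2[OF z] by auto
    have "eventually (\<lambda>y. ereal (r + inner v (y - x) - (-c/2) * norm (y - x)) \<le> F y) (at x)"
      using H c by (metis neg_0_less_iff_less half_gt_zero)
    with neq show "eventually (\<lambda>y. z < (F y - F x - ereal (inner v (y - x))) / ereal (norm (y - x))) (at x)"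
    proof eventually_elim
      case (elim y)
      then have n: "norm (y - x) > 0" by simp
      have "ereal (r + inner v (y - x) + c * norm (y - x)) < ereal (r + inner v (y - x) - (-c/2) * norm (y - x))"
        using n c by (simp add: mult_strict_right_mono_neg)
      with elim have "ereal (r + inner v (y - x) + c * norm (y - x)) < F y" by order
      then have "ereal c < (F y - F x - ereal (inner v (y - x))) / ereal (norm (y - x))"
        using ereal_less_diff_divide_iff[OF n] Fx by simp
      then show ?case using c(1) by order
    qed
  qed
  finally show ?thesis .
qed

lemma frechet_subdiff_add_smooth:
  fixes F :: "'a::real_inner \<Rightarrow> ereal"
  assumes v: "v \<in> frechet_subdiff F x" and Fx: "F x \<noteq> -\<infinity>"
    and G: "(G has_derivative (\<lambda>h. inner h g)) (at x)"
  shows "v + g \<in> frechet_subdiff (\<lambda>y. F y + ereal (G y)) x"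
proof -
  from v have "F x < \<infinity>" by (simp add: frechet_subdiff_def)
  with Fx obtain r where r: "F x = ereal r" by (cases "F x") auto
  have rG: "F x + ereal (G x) = ereal (r + G x)" using r by simp
  have G_approx: "\<forall>e>0. eventually (\<lambda>y. norm (G y - G x - inner (y - x) g) \<le> e * norm (y - x)) (at x)"
    using G unfolding has_derivative_within_alt2 by simp
  show ?thesis
    unfolding frechet_subdiff_iff[where F="\<lambda>y. F y + ereal (G y)", OF rG]
  proof safe
    fix e :: real assume e: "e > 0"
    then have "eventually (\<lambda>y. ereal (r + inner v (y - x) - (e/2) * norm (y - x)) \<le> F y) (at x)"
      using v unfolding frechet_subdiff_iff[where F=F and x=x, OF r] by (meson half_gt_zero)
    moreover have "eventually (\<lambda>y. norm (G y - G x - inner (y - x) g) \<le> (e/2) * norm (y - x)) (at x)"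
      using G_approx e by (meson half_gt_zero)
    ultimately show "eventually (\<lambda>y.
        ereal (r + G x + inner (v + g) (y - x) - e * norm (y - x)) \<le> F y + ereal (G y)) (at x)"
    proof eventually_elim
      case (elim y)
      have "G y \<ge> G x + inner (y - x) g - (e/2) * norm (y - x)"
        using elim(2) by (smt (verit) abs_le_D1 real_norm_def)
      then have "ereal (r + G x + inner (v + g) (y - x) - e * norm (y - x))
          \<le> ereal (r + inner v (y - x) - (e/2) * norm (y - x)) + ereal (G y)"
        by (simp add: inner_add_left inner_add_right inner_commute)
      also have "\<dots> \<le> F y + ereal (G y)" using elim(1) by (rule add_right_mono)
      finally show ?case .
    qed
  qed
qed

lemma frechet_subdiff_diff_smooth:
  fixes F :: "'a::real_inner \<Rightarrow> ereal"
  assumes v: "v \<in> frechet_subdiff (\<lambda>y. F y + ereal (G y)) x" and Fx: "F x \<noteq> -\<infinity>"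
    and G: "(G has_derivative (\<lambda>h. inner h g)) (at x)"
  shows "v - g \<in> frechet_subdiff F x"
proof -
  have "(\<lambda>h. - inner h g) = (\<lambda>h. inner h (- g))" by simp
  with has_derivative_minus[OF G] have "((\<lambda>y. - G y) has_derivative (\<lambda>h. inner h (- g))) (at x)"
    by metis
  from frechet_subdiff_add_smooth[OF v _ this]
  have "v + - g \<in> frechet_subdiff (\<lambda>y. F y + ereal (G y) + ereal (- G y)) x"
    using Fx by simp
  moreover have "F y + ereal (G y) + ereal (- G y) = F y" for y
    by (cases "F y") auto
  ultimately show ?thesis by simp
qed

lemma zero_in_frechet_subdiff_at_minimizer:
  fixes F :: "'a::real_inner \<Rightarrow> ereal"
  assumes min: "is_arg_min F (\<lambda>_. True) x" and Fx: "F x = ereal r"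
  shows "0 \<in> frechet_subdiff F x"
  unfolding frechet_subdiff_iff[where F=F and x=x, OF Fx]
proof (intro allI impI always_eventually)
  fix e :: real and y assume "e > 0"
  moreover have "F x \<le> F y" using min by (simp add: is_arg_min_def not_less)
  ultimately show "ereal (r + inner 0 (y - x) - e * norm (y - x)) \<le> F y"
    using Fx by (simp add: order_trans[OF _ \<open>F x \<le> F y\<close>])
qed

lemma frechet_subdiff_subset_limiting: "frechet_subdiff F x \<subseteq> limiting_subdiff F x"
  unfolding limiting_subdiff_def by (auto intro!: exI[of _ "\<lambda>_. x"] exI[of _ "\<lambda>_. v" for v])

lemma limiting_subdiff_add_smooth:
  fixes F :: "'a::real_inner \<Rightarrow> ereal"
  assumes v: "v \<in> limiting_subdiff F x" and F_not_MInf: "\<And>y. F y \<noteq> -\<infinity>"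
    and G: "\<And>y. (G has_derivative (\<lambda>h. inner h (G' y))) (at y)"
    and G'_cont: "isCont G' x"
  shows "v + G' x \<in> limiting_subdiff (\<lambda>y. F y + ereal (G y)) x"
proof -
  from v obtain xs vs where xs: "xs \<longlonglongrightarrow> x" and Fxs: "(\<lambda>k. F (xs k)) \<longlonglongrightarrow> F x"
    and vs: "\<And>k. vs k \<in> frechet_subdiff F (xs k)" and vs_lim: "vs \<longlonglongrightarrow> v"
    unfolding limiting_subdiff_def by blast
  have "(\<lambda>k. G (xs k)) \<longlonglongrightarrow> G x"
    using xs has_derivative_continuous[OF G] by (simp add: isCont_tendsto_compose)
  then have "(\<lambda>k. F (xs k) + ereal (G (xs k))) \<longlonglongrightarrow> F x + ereal (G x)"
    using Fxs F_not_MInf by (intro tendsto_add_ereal_general tendsto_ereal) auto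
  moreover have "(\<lambda>k. vs k + G' (xs k)) \<longlonglongrightarrow> v + G' x"
    using vs_lim xs G'_cont by (intro tendsto_add) (auto simp: isCont_tendsto_compose)
  moreover have "vs k + G' (xs k) \<in> frechet_subdiff (\<lambda>y. F y + ereal (G y)) (xs k)" for k
    by (rule frechet_subdiff_add_smooth[OF vs F_not_MInf G])
  ultimately show ?thesis
    using xs unfolding limiting_subdiff_def by (intro CollectI exI conjI) auto
qed

lemma has_real_derivative_along_line:
  fixes F :: "'a::real_inner \<Rightarrow> real"
  assumes "(F has_derivative (\<lambda>h. inner h g)) (at (a + t *\<^sub>R d))"
  shows "((\<lambda>s. F (a + s *\<^sub>R d)) has_real_derivative inner d g) (at t)"
proof -
  have "((\<lambda>s. a + s *\<^sub>R d) has_derivative (\<lambda>s. s *\<^sub>R d)) (at t)"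
    by (auto intro!: derivative_eq_intros)
  from diff_chain_at[OF this assms]
  show ?thesis unfolding has_field_derivative_def o_def
    by (rule has_derivative_eq_rhs) (auto simp: inner_commute)
qed

lemma convex_on_gradient_inequality:
  fixes \<psi> :: "'a::real_inner \<Rightarrow> real"
  assumes convex: "convex_on UNIV \<psi>" and deriv: "(\<psi> has_derivative (\<lambda>h. inner h g)) (at a)"
  shows "\<psi> a + inner g (b - a) \<le> \<psi> b"
proof -
  define \<gamma> where "\<gamma> t = \<psi> (a + t *\<^sub>R (b - a))" for t
  have "convex_on UNIV \<gamma>"
    unfolding convex_on_def
  proof safe
    fix s t u v :: real assume uv: "0 \<le> u" "0 \<le> v" "u + v = 1"
    then have "a + (u *\<^sub>R s + v *\<^sub>R t) *\<^sub>R (b - a)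
        = u *\<^sub>R (a + s *\<^sub>R (b - a)) + v *\<^sub>R (a + t *\<^sub>R (b - a))"
      by (simp add: algebra_simps flip: scaleR_add_left)
    then show "\<gamma> (u *\<^sub>R s + v *\<^sub>R t) \<le> u * \<gamma> s + v * \<gamma> t"
      unfolding \<gamma>_def using convex uv by (simp add: convex_on_def)
  qed simp
  moreover have "(\<gamma> has_real_derivative inner (b - a) g) (at 0)"
    unfolding \<gamma>_def by (rule has_real_derivative_along_line) (simp add: deriv)
  ultimately have "\<gamma> 1 - \<gamma> 0 \<ge> inner (b - a) g * (1 - 0)"
    by (intro convex_on_imp_above_tangent) (auto simp: has_field_derivative_at_within)
  then show ?thesis unfolding \<gamma>_def by (simp add: inner_commute)
qed

lemma strongly_convex_bregman_ge:
  fixes \<phi> :: "'a::real_inner \<Rightarrow> real"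
  assumes grad: "\<And>u. GDERIV \<phi> u :> \<phi>' u" and sc: "strongly_convex \<theta> \<phi>"
  shows "\<theta> / 2 * (norm (b - a))\<^sup>2 \<le> bregman \<phi> \<phi>' b a"
proof -
  have "((\<lambda>x. \<phi> x - \<theta> / 2 * (norm x)\<^sup>2) has_derivative (\<lambda>h. inner h (\<phi>' a - \<theta> *\<^sub>R a))) (at a)"
    using grad[of a] unfolding gderiv_def
    by (auto intro!: derivative_eq_intros simp: inner_diff_right inner_commute)
  from convex_on_gradient_inequality[OF sc[unfolded strongly_convex_def] this, of b]
  show ?thesis
    unfolding bregman_def power2_norm_eq_inner
    by (simp add: inner_diff_left inner_diff_right inner_commute algebra_simps)
qed

lemma descent_lemma:
  fixes F :: "'a::real_inner \<Rightarrow> real"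
  assumes grad: "\<And>u. GDERIV F u :> F' u" and lip: "C-lipschitz_on UNIV F'"
  shows "F b \<le> F a + inner (F' a) (b - a) + C / 2 * (norm (b - a))\<^sup>2"
proof -
  define d where "d = b - a"
  define \<psi> where "\<psi> t = F (a + t *\<^sub>R d) - t * inner (F' a) d - C / 2 * t\<^sup>2 * (norm d)\<^sup>2" for t
  have "\<psi> 1 \<le> \<psi> 0"
  proof (rule DERIV_nonpos_imp_nonincreasing[of 0 1 \<psi>])
    fix t :: real assume t: "0 \<le> t" "t \<le> 1"
    have "(\<psi> has_real_derivative inner d (F' (a + t *\<^sub>R d)) - inner (F' a) d - C * t * (norm d)\<^sup>2) (at t)"
      unfolding \<psi>_def using grad unfolding gderiv_def
      by (auto intro!: derivative_eq_intros has_real_derivative_along_line simp: power2_eq_square)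
    moreover have "inner d (F' (a + t *\<^sub>R d)) - inner (F' a) d \<le> C * t * (norm d)\<^sup>2"
    proof -
      have "inner d (F' (a + t *\<^sub>R d)) - inner (F' a) d = inner d (F' (a + t *\<^sub>R d) - F' a)"
        by (simp add: inner_diff_right inner_commute)
      also have "\<dots> \<le> norm d * norm (F' (a + t *\<^sub>R d) - F' a)"
        by (rule order_trans[OF _ Cauchy_Schwarz_ineq2]) simp
      also have "\<dots> \<le> norm d * (C * norm (t *\<^sub>R d))"
        using lipschitz_onD[OF lip, of "a + t *\<^sub>R d" a] by (simp add: dist_norm mult_left_mono)
      also have "\<dots> = C * t * (norm d)\<^sup>2"
        using t by (simp add: power2_eq_square)
      finally show ?thesis .
    qed
    ultimately show "\<exists>y. (\<psi> has_real_derivative y) (at t) \<and> y \<le> 0"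
      by force
  qed simp
  then show ?thesis unfolding \<psi>_def d_def by (simp add: algebra_simps)
qed

lemma bregman_prox_frechet_subgradient:
  fixes F :: "'a::real_inner \<Rightarrow> ereal"
  assumes grad: "\<And>u. GDERIV \<phi> u :> \<phi>' u"
    and min: "is_arg_min (\<lambda>u. F u + ereal (inner c u + bregman \<phi> \<phi>' u z)) (\<lambda>_. True) p"
    and finite: "F p \<noteq> \<infinity>" "F p \<noteq> -\<infinity>"
  shows "- (c + \<phi>' p - \<phi>' z) \<in> frechet_subdiff F p"
proof -
  define G where "G u = inner c u + bregman \<phi> \<phi>' u z" for u
  have "(G has_derivative (\<lambda>h. inner h (c + \<phi>' p - \<phi>' z))) (at p)"
    using grad[of p] unfolding G_def bregman_def gderiv_def
    by (auto intro!: derivative_eq_intros simp: inner_add_right inner_diff_right inner_commute)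
  moreover obtain r where "F p + ereal (G p) = ereal r"
    using finite by (cases "F p") auto
  then have "0 \<in> frechet_subdiff (\<lambda>u. F u + ereal (G u)) p"
    using min unfolding G_def by (intro zero_in_frechet_subdiff_at_minimizer) auto
  ultimately show ?thesis
    using frechet_subdiff_diff_smooth finite(2) by fastforce
qed

lemma bregman_prox_descent:
  fixes F :: "'a::real_inner \<Rightarrow> ereal"
  assumes f_grad: "\<And>u. GDERIV f u :> f' u" and f'_lip: "C-lipschitz_on UNIV f'"
    and \<phi>_grad: "\<And>u. GDERIV \<phi> u :> \<phi>' u" and \<phi>_sc: "strongly_convex \<theta> \<phi>" and "C \<le> \<theta>"
    and min: "is_arg_min (\<lambda>u. F u + ereal (inner (f' z) u + bregman \<phi> \<phi>' u z)) (\<lambda>_. True) p"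
  shows "F p + ereal (f p) \<le> F z + ereal (f z)"
proof -
  define G where "G u = inner (f' z) u + bregman \<phi> \<phi>' u z" for u
  have "C / 2 * (norm (p - z))\<^sup>2 \<le> \<theta> / 2 * (norm (p - z))\<^sup>2"
    using \<open>C \<le> \<theta>\<close> by (simp add: mult_right_mono)
  then have "f p - G p \<le> f z - G z"
    using descent_lemma[OF f_grad f'_lip, where a=z and b=p]
      strongly_convex_bregman_ge[OF \<phi>_grad \<phi>_sc, where a=z and b=p]
    unfolding G_def by (simp add: bregman_def inner_diff_right)
  moreover have "F p + ereal (G p) \<le> F z + ereal (G z)"
    using min unfolding G_def by (simp add: is_arg_min_def not_less)
  ultimately show ?thesis
    by (cases "F p"; cases "F z") auto
qed

lemma coercive_sublevel_bounded:
  fixes F :: "'a::real_normed_vector \<Rightarrow> ereal"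
  assumes "(F \<longlongrightarrow> \<infinity>) at_infinity"
  obtains R where "\<And>p. F p \<le> ereal M \<Longrightarrow> norm p \<le> R"
proof -
  have "eventually (\<lambda>p. ereal M < F p) at_infinity"
    using assms by (simp add: tendsto_PInfty)
  then obtain R where "\<And>p. R \<le> norm p \<Longrightarrow> ereal M < F p"
    unfolding eventually_at_infinity by blast
  then show ?thesis using that[of R] by (meson linorder_not_le order_less_imp_le)
qed

lemma interleaved_nonincreasing_le_first:
  fixes a b :: "nat \<Rightarrow> 'a::preorder"
  assumes ab: "\<And>k. a (Suc k) \<le> b k" and ba: "\<And>k. b (Suc k) \<le> a (Suc k)" and "1 \<le> k"
  shows "a k \<le> a 1 \<and> b k \<le> a 1"
  using \<open>1 \<le> k\<close>
proof (induction k rule: dec_induct)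
  case base
  then show ?case using ba[of 0] by simp
next
  case (step k)
  then have "a (Suc k) \<le> a 1" using ab[of k] order_trans by blast
  then show ?case using ba[of k] order_trans by blast
qed

lemma limiting_subdiff_add_separable_smooth:
  fixes Q :: "'a::real_inner \<times> 'b::real_inner \<Rightarrow> ereal"
  assumes v: "(vx, vy) \<in> limiting_subdiff Q (a, b)" and Q_not_MInf: "\<And>p. Q p \<noteq> -\<infinity>"
    and f_grad: "\<And>u. GDERIV f u :> f' u" and f'_cont: "isCont f' a"
    and g_grad: "\<And>v. GDERIV g v :> g' v" and g'_cont: "isCont g' b"
  shows "(vx + f' a, vy + g' b) \<in> limiting_subdiff (\<lambda>p. Q p + ereal (f (fst p) + g (snd p))) (a, b)"
proof -
  have "((\<lambda>p. f (fst p) + g (snd p)) has_derivative (\<lambda>h. inner h (f' (fst p), g' (snd p)))) (at p)"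
    for p :: "'a \<times> 'b"
  proof -
    have "((\<lambda>p. f (fst p)) has_derivative (\<lambda>h. inner (fst h) (f' (fst p)))) (at p)"
      using diff_chain_at[OF has_derivative_fst[OF has_derivative_ident] f_grad[unfolded gderiv_def]]
      by (simp add: o_def)
    moreover have "((\<lambda>p. g (snd p)) has_derivative (\<lambda>h. inner (snd h) (g' (snd p)))) (at p)"
      using diff_chain_at[OF has_derivative_snd[OF has_derivative_ident] g_grad[unfolded gderiv_def]]
      by (simp add: o_def)
    ultimately show ?thesis
      by (rule has_derivative_eq_rhs[OF has_derivative_add]) (auto simp: inner_prod_def)
  qed
  moreover have "isCont (\<lambda>p. (f' (fst p), g' (snd p))) (a, b)"
    using isCont_o2[where f=fst and a="(a, b)" and g=f'] isCont_o2[where f=snd and a="(a, b)" and g=g'] f'_cont g'_cont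
    by (auto intro: continuous_Pair)
  ultimately show ?thesis
    using limiting_subdiff_add_smooth[OF v Q_not_MInf] by fastforce
qed

locale alternating_bregman_proximal =
  fixes f :: "'a::real_inner \<Rightarrow> real" and f' :: "'a \<Rightarrow> 'a"
    and g :: "'b::real_inner \<Rightarrow> real" and g' :: "'b \<Rightarrow> 'b"
    and Q :: "'a \<times> 'b \<Rightarrow> ereal" and L :: "'a \<times> 'b \<Rightarrow> ereal"
    and q :: "'a \<Rightarrow> 'b \<Rightarrow> real" and qx :: "'a \<Rightarrow> 'b \<Rightarrow> 'a" and h :: "'a \<Rightarrow> ereal"
    and \<phi>1 :: "'a \<Rightarrow> real" and \<phi>1' :: "'a \<Rightarrow> 'a"
    and \<phi>2 :: "'b \<Rightarrow> real" and \<phi>2' :: "'b \<Rightarrow> 'b"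
    and Lf Lg \<theta>1 \<theta>2 \<eta>1 \<eta>2 :: real
    and x xh :: "nat \<Rightarrow> 'a" and y yh :: "nat \<Rightarrow> 'b"
  assumes L_def: "\<And>u v. L (u, v) = ereal (f u) + Q (u, v) + ereal (g v)"
    and f_grad: "\<And>u. GDERIV f u :> f' u" and g_grad: "\<And>v. GDERIV g v :> g' v"
    and f'_lip: "Lf-lipschitz_on UNIV f'" and g'_lip: "Lg-lipschitz_on UNIV g'"
    and Q_proper: "proper_fun Q"
    and \<phi>1_grad: "\<And>u. GDERIV \<phi>1 u :> \<phi>1' u" and \<phi>2_grad: "\<And>v. GDERIV \<phi>2 v :> \<phi>2' v"
    and \<phi>1_sc: "strongly_convex \<theta>1 \<phi>1" and \<phi>2_sc: "strongly_convex \<theta>2 \<phi>2"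
    and \<theta>1_ge: "Lf \<le> \<theta>1" and \<theta>2_ge: "Lg \<le> \<theta>2"
    and \<phi>1'_lip: "\<eta>1-lipschitz_on UNIV \<phi>1'" and \<phi>2'_lip: "\<eta>2-lipschitz_on UNIV \<phi>2'"
    and L_coercive: "(L \<longlongrightarrow> \<infinity>) at_infinity"
    and Q_partial_subdiff: "\<And>u v. (u, v) \<in> edom Q \<Longrightarrow>
        limiting_subdiff (\<lambda>u'. Q (u', v)) u \<times> limiting_subdiff (\<lambda>v'. Q (u, v')) v
          \<subseteq> limiting_subdiff Q (u, v)"
    and Q_split: "\<And>u v. Q (u, v) = ereal (q u v) + h u"
    and q_grad: "\<And>u v. GDERIV (\<lambda>u'. q u' v) u :> qx u v"
    and qx_lip: "\<And>D1 D2. bounded (D1 \<times> D2) \<Longrightarrow> D1 \<times> D2 \<subseteq> edom Q \<Longrightarrow>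
        \<exists>\<xi>>0. \<forall>xb\<in>D1. \<forall>v\<in>D2. \<forall>vb\<in>D2. norm (qx xb v - qx xb vb) \<le> \<xi> * norm (v - vb)"
    and step_x: "\<And>k. is_arg_min
        (\<lambda>u. Q (u, yh k) + ereal (inner (f' (xh k)) u + bregman \<phi>1 \<phi>1' u (xh k)))
        (\<lambda>_. True) (x (Suc k))"
    and step_y: "\<And>k. is_arg_min
        (\<lambda>v. Q (x (Suc k), v) + ereal (inner (g' (yh k)) v + bregman \<phi>2 \<phi>2' v (yh k)))
        (\<lambda>_. True) (y (Suc k))"
    and extrapolation_le: "\<And>k. L (xh (Suc k), yh (Suc k)) \<le> L (x (Suc k), y (Suc k))"
    \<comment> \<open>the only property of the inertial extrapolation step that the argument uses\<close>
begin

definition subgrad_x :: "nat \<Rightarrow> 'a" where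
  "subgrad_x k = qx (x (Suc k)) (y (Suc k)) - qx (x (Suc k)) (yh k)
     + (f' (x (Suc k)) - f' (xh k) - \<phi>1' (x (Suc k)) + \<phi>1' (xh k))"

definition subgrad_y :: "nat \<Rightarrow> 'b" where
  "subgrad_y k = g' (y (Suc k)) - g' (yh k) - \<phi>2' (y (Suc k)) + \<phi>2' (yh k)"

lemma Q_not_MInf: "Q p \<noteq> -\<infinity>"
  using Q_proper unfolding proper_fun_def by blast

lemma L_eq_Q_plus_smooth: "L = (\<lambda>p. Q p + ereal (f (fst p) + g (snd p)))"
proof
  fix p :: "'a \<times> 'b"
  show "L p = Q p + ereal (f (fst p) + g (snd p))"
    using L_def[of "fst p" "snd p"] by (cases "Q p") auto
qed

lemma Q_finite_at_iterate: "Q (x (Suc k), v) < \<infinity>"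
proof -
  have Q_finite_iff: "Q (u, v) < \<infinity> \<longleftrightarrow> h u < \<infinity>" for u v
    unfolding Q_split by (cases "h u") auto
  obtain p0 where "Q p0 < \<infinity>"
    using Q_proper by (auto simp: proper_fun_def)
  then have "Q (fst p0, yh k) + ereal (inner (f' (xh k)) (fst p0) + bregman \<phi>1 \<phi>1' (fst p0) (xh k)) < \<infinity>"
    using Q_finite_iff[of "fst p0" "snd p0"] Q_finite_iff[of "fst p0" "yh k"] by simp
  moreover have "Q (x (Suc k), yh k) + ereal (inner (f' (xh k)) (x (Suc k)) + bregman \<phi>1 \<phi>1' (x (Suc k)) (xh k))
      \<le> Q (fst p0, yh k) + ereal (inner (f' (xh k)) (fst p0) + bregman \<phi>1 \<phi>1' (fst p0) (xh k))"
    using step_x[of k] by (simp add: is_arg_min_def not_less)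
  ultimately have "Q (x (Suc k), yh k) < \<infinity>"
    by (cases "Q (x (Suc k), yh k)") auto
  then show ?thesis
    using Q_finite_iff by simp
qed

lemma frechet_subgrad_x:
  "- (f' (xh k) + \<phi>1' (x (Suc k)) - \<phi>1' (xh k)) + (qx (x (Suc k)) (y (Suc k)) - qx (x (Suc k)) (yh k))
     \<in> frechet_subdiff (\<lambda>u. Q (u, y (Suc k))) (x (Suc k))"
proof -
  have "- (f' (xh k) + \<phi>1' (x (Suc k)) - \<phi>1' (xh k)) \<in> frechet_subdiff (\<lambda>u. Q (u, yh k)) (x (Suc k))"
    using bregman_prox_frechet_subgradient[OF \<phi>1_grad step_x] Q_finite_at_iterate Q_not_MInf by simp
  moreover have "((\<lambda>u. q u (y (Suc k)) - q u (yh k)) has_derivative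
      (\<lambda>d. inner d (qx (x (Suc k)) (y (Suc k)) - qx (x (Suc k)) (yh k)))) (at (x (Suc k)))"
    using q_grad unfolding gderiv_def by (auto intro!: derivative_eq_intros simp: inner_diff_right)
  ultimately have "- (f' (xh k) + \<phi>1' (x (Suc k)) - \<phi>1' (xh k)) + (qx (x (Suc k)) (y (Suc k)) - qx (x (Suc k)) (yh k))
      \<in> frechet_subdiff (\<lambda>u. Q (u, yh k) + ereal (q u (y (Suc k)) - q u (yh k))) (x (Suc k))"
    using Q_not_MInf by (rule_tac frechet_subdiff_add_smooth)
  \<comment> \<open>h does not depend on the second argument, so only the smooth part q changes\<close>
  moreover have "Q (u, yh k) + ereal (q u (y (Suc k)) - q u (yh k)) = Q (u, y (Suc k))" for u
    unfolding Q_split by (cases "h u") auto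
  ultimately show ?thesis by simp
qed

lemma frechet_subgrad_y:
  "- (g' (yh k) + \<phi>2' (y (Suc k)) - \<phi>2' (yh k)) \<in> frechet_subdiff (\<lambda>v. Q (x (Suc k), v)) (y (Suc k))"
  using bregman_prox_frechet_subgradient[OF \<phi>2_grad step_y] Q_finite_at_iterate Q_not_MInf by simp

lemma subgrad_in_limiting_subdiff:
  "(subgrad_x k, subgrad_y k) \<in> limiting_subdiff L (x (Suc k), y (Suc k))"
proof -
  let ?vx = "- (f' (xh k) + \<phi>1' (x (Suc k)) - \<phi>1' (xh k)) + (qx (x (Suc k)) (y (Suc k)) - qx (x (Suc k)) (yh k))"
  let ?vy = "- (g' (yh k) + \<phi>2' (y (Suc k)) - \<phi>2' (yh k))"
  have "(x (Suc k), y (Suc k)) \<in> edom Q"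
    using Q_finite_at_iterate by (simp add: edom_def)
  then have "(?vx, ?vy) \<in> limiting_subdiff Q (x (Suc k), y (Suc k))"
    using Q_partial_subdiff frechet_subgrad_x[of k] frechet_subgrad_y[of k]
      frechet_subdiff_subset_limiting[of "\<lambda>u. Q (u, y (Suc k))"]
      frechet_subdiff_subset_limiting[of "\<lambda>v. Q (x (Suc k), v)"] by blast
  moreover have "isCont f' (x (Suc k))" "isCont g' (y (Suc k))"
    using lipschitz_on_continuous_on[OF f'_lip] lipschitz_on_continuous_on[OF g'_lip]
    by (simp_all add: continuous_on_eq_continuous_at)
  ultimately have "(?vx + f' (x (Suc k)), ?vy + g' (y (Suc k))) \<in> limiting_subdiff L (x (Suc k), y (Suc k))"
    unfolding L_eq_Q_plus_smooth by (rule limiting_subdiff_add_separable_smooth[OF _ Q_not_MInf f_grad _ g_grad])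
  moreover have "(?vx + f' (x (Suc k)), ?vy + g' (y (Suc k))) = (subgrad_x k, subgrad_y k)"
    by (simp add: subgrad_x_def subgrad_y_def algebra_simps)
  ultimately show ?thesis by simp
qed

lemma L_descent: "L (x (Suc k), y (Suc k)) \<le> L (xh k, yh k)"
proof -
  have "Q (x (Suc k), y (Suc k)) + ereal (g (y (Suc k))) \<le> Q (x (Suc k), yh k) + ereal (g (yh k))"
    by (rule bregman_prox_descent[OF g_grad g'_lip \<phi>2_grad \<phi>2_sc \<theta>2_ge step_y])
  then have "L (x (Suc k), y (Suc k)) \<le> ereal (f (x (Suc k))) + (Q (x (Suc k), yh k) + ereal (g (yh k)))"
    unfolding L_def by (simp add: add.assoc add_left_mono)
  also have "\<dots> = Q (x (Suc k), yh k) + ereal (f (x (Suc k))) + ereal (g (yh k))"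
    by (simp add: ac_simps)
  also have "\<dots> \<le> Q (xh k, yh k) + ereal (f (xh k)) + ereal (g (yh k))"
    by (intro add_right_mono bregman_prox_descent[OF f_grad f'_lip \<phi>1_grad \<phi>1_sc \<theta>1_ge step_x])
  also have "\<dots> = L (xh k, yh k)"
    unfolding L_def by (simp add: ac_simps)
  finally show ?thesis .
qed

lemma iterates_bounded:
  obtains R where "\<And>k. 1 \<le> k \<Longrightarrow> norm (x k, y k) \<le> R" "\<And>k. 1 \<le> k \<Longrightarrow> norm (xh k, yh k) \<le> R"
proof -
  have "L (x 1, y 1) < \<infinity>"
    using Q_finite_at_iterate[of 0 "y 1"] by (simp add: L_eq_Q_plus_smooth)
  then obtain M where M: "L (x 1, y 1) \<le> ereal M"
    by (cases "L (x 1, y 1)") auto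
  obtain R where R: "\<And>p. L p \<le> ereal M \<Longrightarrow> norm p \<le> R"
    using coercive_sublevel_bounded[OF L_coercive] by blast
  have "L (x k, y k) \<le> L (x 1, y 1) \<and> L (xh k, yh k) \<le> L (x 1, y 1)" if "1 \<le> k" for k
    using interleaved_nonincreasing_le_first[where a="\<lambda>k. L (x k, y k)" and b="\<lambda>k. L (xh k, yh k)"]
      L_descent extrapolation_le that by blast
  then show ?thesis
    using that R M order_trans by meson
qed

lemma qx_lipschitz_along_iterates:
  obtains \<xi> where "\<xi> > 0"
    "\<And>k. 1 \<le> k \<Longrightarrow> norm (qx (x (Suc k)) (y (Suc k)) - qx (x (Suc k)) (yh k)) \<le> \<xi> * norm (y (Suc k) - yh k)"
proof -
  obtain R where R: "\<And>k. 1 \<le> k \<Longrightarrow> norm (x k, y k) \<le> R" "\<And>k. 1 \<le> k \<Longrightarrow> norm (xh k, yh k) \<le> R"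
    using iterates_bounded by blast
  define D1 where "D1 = range (\<lambda>k. x (Suc k))"
  define D2 where "D2 = range (\<lambda>k. y (Suc k)) \<union> yh ` {1..}"
  have "norm (x k) \<le> R" "norm (y k) \<le> R" "norm (yh k) \<le> R" if "1 \<le> k" for k
    using R[OF that] norm_fst_le[of "x k" "y k"] norm_snd_le[of "y k" "x k"] norm_snd_le[of "yh k" "xh k"]
    by linarith+
  then have "bounded (D1 \<times> D2)"
    unfolding D1_def D2_def by (intro bounded_Times) (auto simp: bounded_iff intro!: exI[of _ R])
  moreover have "D1 \<times> D2 \<subseteq> edom Q"
    using Q_finite_at_iterate by (auto simp: D1_def edom_def)
  ultimately obtain \<xi> where "\<xi> > 0"
    and \<xi>: "\<forall>xb\<in>D1. \<forall>v\<in>D2. \<forall>vb\<in>D2. norm (qx xb v - qx xb vb) \<le> \<xi> * norm (v - vb)"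
    by (metis qx_lip)
  show ?thesis
    by (rule that[OF \<open>\<xi> > 0\<close>]) (use \<xi> in \<open>auto simp: D1_def D2_def\<close>)
qed

lemma subgrad_norm_bound:
  obtains \<rho> where "\<rho> > 0" "\<And>k. 1 \<le> k \<Longrightarrow>
    norm (subgrad_x k, subgrad_y k) \<le> \<rho> * norm (x (Suc k) - xh k, y (Suc k) - yh k)"
proof -
  obtain \<xi> where \<xi>: "\<xi> > 0"
    "\<And>k. 1 \<le> k \<Longrightarrow> norm (qx (x (Suc k)) (y (Suc k)) - qx (x (Suc k)) (yh k)) \<le> \<xi> * norm (y (Suc k) - yh k)"
    using qx_lipschitz_along_iterates by blast
  have lip: "norm (F u - F v) \<le> C * norm (u - v)" if "C-lipschitz_on UNIV F" for C F u v
    using lipschitz_onD[OF that] by (simp add: dist_norm)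
  have nonneg: "0 \<le> Lf" "0 \<le> Lg" "0 \<le> \<eta>1" "0 \<le> \<eta>2"
    using f'_lip g'_lip \<phi>1'_lip \<phi>2'_lip by (auto dest: lipschitz_on_nonneg)
  define \<rho> where "\<rho> = \<xi> + Lf + \<eta>1 + Lg + \<eta>2"
  have "norm (subgrad_x k, subgrad_y k) \<le> \<rho> * norm (x (Suc k) - xh k, y (Suc k) - yh k)" if "1 \<le> k" for k
  proof -
    define N where "N = norm (x (Suc k) - xh k, y (Suc k) - yh k)"
    have dx: "norm (x (Suc k) - xh k) \<le> N" and dy: "norm (y (Suc k) - yh k) \<le> N"
      unfolding N_def by (rule norm_fst_le, rule norm_snd_le)
    have "norm (subgrad_x k) \<le> (\<xi> + Lf + \<eta>1) * N"
    proof -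
      have eq: "subgrad_x k = (qx (x (Suc k)) (y (Suc k)) - qx (x (Suc k)) (yh k))
          + ((f' (x (Suc k)) - f' (xh k)) - (\<phi>1' (x (Suc k)) - \<phi>1' (xh k)))"
        by (simp add: subgrad_x_def algebra_simps)
      have "norm (subgrad_x k) \<le> norm (qx (x (Suc k)) (y (Suc k)) - qx (x (Suc k)) (yh k))
          + norm (f' (x (Suc k)) - f' (xh k)) + norm (\<phi>1' (x (Suc k)) - \<phi>1' (xh k))"
        unfolding eq using norm_triangle_ineq[of "qx (x (Suc k)) (y (Suc k)) - qx (x (Suc k)) (yh k)"
            "(f' (x (Suc k)) - f' (xh k)) - (\<phi>1' (x (Suc k)) - \<phi>1' (xh k))"]
          norm_triangle_ineq4[of "f' (x (Suc k)) - f' (xh k)" "\<phi>1' (x (Suc k)) - \<phi>1' (xh k)"]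
        by linarith
      also have "\<dots> \<le> \<xi> * norm (y (Suc k) - yh k)
          + Lf * norm (x (Suc k) - xh k) + \<eta>1 * norm (x (Suc k) - xh k)"
        using \<xi>(2)[OF that] lip[OF f'_lip, of "x (Suc k)" "xh k"] lip[OF \<phi>1'_lip, of "x (Suc k)" "xh k"]
        by linarith
      also have "\<dots> \<le> (\<xi> + Lf + \<eta>1) * N"
        unfolding distrib_right using mult_left_mono[OF dy, of \<xi>] mult_left_mono[OF dx, of Lf]
          mult_left_mono[OF dx, of \<eta>1] \<xi>(1) nonneg by linarith
      finally show ?thesis .
    qed
    moreover have "norm (subgrad_y k) \<le> (Lg + \<eta>2) * N"
    proof -
      have "subgrad_y k = (g' (y (Suc k)) - g' (yh k)) - (\<phi>2' (y (Suc k)) - \<phi>2' (yh k))"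
        by (simp add: subgrad_y_def algebra_simps)
      then have "norm (subgrad_y k) \<le> norm (g' (y (Suc k)) - g' (yh k)) + norm (\<phi>2' (y (Suc k)) - \<phi>2' (yh k))"
        by (metis norm_triangle_ineq4)
      also have "\<dots> \<le> Lg * norm (y (Suc k) - yh k) + \<eta>2 * norm (y (Suc k) - yh k)"
        using lip[OF g'_lip, of "y (Suc k)" "yh k"] lip[OF \<phi>2'_lip, of "y (Suc k)" "yh k"]
        by linarith
      also have "\<dots> \<le> (Lg + \<eta>2) * N"
        unfolding distrib_right using mult_left_mono[OF dy, of Lg] mult_left_mono[OF dy, of \<eta>2]
          nonneg by linarith
      finally show ?thesis .
    qed
    ultimately show ?thesis
      using norm_Pair_le[of "subgrad_x k" "subgrad_y k"] unfolding N_def \<rho>_def by (simp add: algebra_simps)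
  qed
  moreover have "\<rho> > 0"
    using \<xi>(1) nonneg by (simp add: \<rho>_def)
  ultimately show ?thesis using that by blast
qed

end

theorem lemma3p2:
  fixes f :: "'a::euclidean_space \<Rightarrow> real" and f' :: "'a \<Rightarrow> 'a"
    and g :: "'b::euclidean_space \<Rightarrow> real" and g' :: "'b \<Rightarrow> 'b"
    and Q :: "'a \<times> 'b \<Rightarrow> ereal" and L :: "'a \<times> 'b \<Rightarrow> ereal"
    and q :: "'a \<Rightarrow> 'b \<Rightarrow> real" and qx :: "'a \<Rightarrow> 'b \<Rightarrow> 'a"
    and h :: "'a \<Rightarrow> ereal"
    and \<phi>1 :: "'a \<Rightarrow> real" and \<phi>1' :: "'a \<Rightarrow> 'a"
    and \<phi>2 :: "'b \<Rightarrow> real" and \<phi>2' :: "'b \<Rightarrow> 'b"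
    and Lf Lg \<theta>1 \<theta>2 \<eta>1 \<eta>2 :: real
    and x xh px :: "nat \<Rightarrow> 'a" and y yh py :: "nat \<Rightarrow> 'b"
    and xm1 :: 'a and ym1 :: 'b
    and \<alpha> \<beta> :: "nat \<Rightarrow> real" and \<alpha>max \<beta>max :: real
  assumes L_def: "\<And>u v. L (u, v) = ereal (f u) + Q (u, v) + ereal (g v)"
    \<comment> \<open>(A1)\<close>
    and L_bdd_below: "\<exists>c::real. \<forall>p. ereal c \<le> L p"
    and f_grad: "\<And>u. GDERIV f u :> f' u" and f'_cont: "continuous_on UNIV f'"
    and g_grad: "\<And>v. GDERIV g v :> g' v" and g'_cont: "continuous_on UNIV g'"
    and f'_lip: "Lf-lipschitz_on UNIV f'" and g'_lip: "Lg-lipschitz_on UNIV g'"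
    and Q_proper: "proper_fun Q" and Q_lsc: "lsc_fun Q"
    and \<phi>1_grad: "\<And>u. GDERIV \<phi>1 u :> \<phi>1' u"
    and \<phi>2_grad: "\<And>v. GDERIV \<phi>2 v :> \<phi>2' v"
    and \<phi>1_sc: "strongly_convex \<theta>1 \<phi>1" and \<phi>2_sc: "strongly_convex \<theta>2 \<phi>2"
    and \<theta>1_gt: "\<theta>1 > Lf" and \<theta>2_gt: "\<theta>2 > Lg"
    and \<phi>1'_lip: "\<eta>1-lipschitz_on UNIV \<phi>1'" and \<phi>2'_lip: "\<eta>2-lipschitz_on UNIV \<phi>2'"
    \<comment> \<open>(A2)\<close>
    and L_coercive: "(L \<longlongrightarrow> \<infinity>) at_infinity"
    and domQ_closed: "closed (edom Q)"
    and Q_partial_subdiff: "\<And>u v. (u, v) \<in> edom Q \<Longrightarrow>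
        limiting_subdiff (\<lambda>u'. Q (u', v)) u \<times> limiting_subdiff (\<lambda>v'. Q (u, v')) v
          \<subseteq> limiting_subdiff Q (u, v)"
    and Q_split: "\<And>u v. Q (u, v) = ereal (q u v) + h u"
    and h_cont: "continuous_on (edom h) h"
    and q_cont: "continuous_on (edom Q) (\<lambda>p. q (fst p) (snd p))"
    and q_grad: "\<And>u v. GDERIV (\<lambda>u'. q u' v) u :> qx u v"
    and qx_cont: "\<And>v. continuous_on UNIV (\<lambda>u. qx u v)"
    and qx_lip: "\<And>D1 D2. bounded (D1 \<times> D2) \<Longrightarrow> D1 \<times> D2 \<subseteq> edom Q \<Longrightarrow>
        \<exists>\<xi>>0. \<forall>xb\<in>D1. \<forall>v\<in>D2. \<forall>vb\<in>D2. norm (qx xb v - qx xb vb) \<le> \<xi> * norm (v - vb)"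
    \<comment> \<open>algorithm parameters\<close>
    and \<alpha>max_nonneg: "\<alpha>max \<ge> 0" and \<beta>max_nonneg: "\<beta>max \<ge> 0"
    and \<alpha>\<beta>max: "\<alpha>max + \<beta>max < 1"
    and \<alpha>_range: "\<And>k. \<alpha> k \<in> {0..\<alpha>max}" and \<beta>_range: "\<And>k. \<beta> k \<in> {0..\<beta>max}"
    \<comment> \<open>algorithm iterates; xm1, ym1 play the role of x_{-1}, y_{-1}\<close>
    and init: "xh 0 = x 0" "yh 0 = y 0"
    and step_x: "\<And>k. is_arg_min
        (\<lambda>u. Q (u, yh k) + ereal (inner (f' (xh k)) u + bregman \<phi>1 \<phi>1' u (xh k)))
        (\<lambda>_. True) (x (Suc k))"
    and step_y: "\<And>k. is_arg_min
        (\<lambda>v. Q (x (Suc k), v) + ereal (inner (g' (yh k)) v + bregman \<phi>2 \<phi>2' v (yh k)))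
        (\<lambda>_. True) (y (Suc k))"
    and step_extra: "\<And>k.
        let xp = (if k = 0 then xm1 else x (k - 1));
            yp = (if k = 0 then ym1 else y (k - 1));
            u = x (Suc k) + \<alpha> k *\<^sub>R (x (Suc k) - x k) + \<beta> k *\<^sub>R (x k - xp);
            v = y (Suc k) + \<alpha> k *\<^sub>R (y (Suc k) - y k) + \<beta> k *\<^sub>R (y k - yp)
        in (xh (Suc k), yh (Suc k)) =
             (if L (u, v) \<le> L (x (Suc k), y (Suc k)) then (u, v) else (x (Suc k), y (Suc k)))"
    \<comment> \<open>the vectors p_x^{k+1}, p_y^{k+1}\<close>
    and px_def: "\<And>k. k \<ge> 1 \<Longrightarrow> px (Suc k) =
        qx (x (Suc k)) (y (Suc k)) - qx (x (Suc k)) (yh k)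
        + (f' (x (Suc k)) - f' (xh k) - \<phi>1' (x (Suc k)) + \<phi>1' (xh k))"
    and py_def: "\<And>k. k \<ge> 1 \<Longrightarrow> py (Suc k) =
        g' (y (Suc k)) - g' (yh k) - \<phi>2' (y (Suc k)) + \<phi>2' (yh k)"
  shows "(\<forall>k\<ge>1. (px (Suc k), py (Suc k)) \<in> limiting_subdiff L (x (Suc k), y (Suc k)))
    \<and> (\<exists>\<rho>>0. \<forall>k\<ge>1. norm (px (Suc k), py (Suc k))
          \<le> \<rho> * norm (x (Suc k) - xh k, y (Suc k) - yh k))"
proof -
  interpret alternating_bregman_proximal f f' g g' Q L q qx h \<phi>1 \<phi>1' \<phi>2 \<phi>2' Lf Lg \<theta>1 \<theta>2 \<eta>1 \<eta>2 x xh y yh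
  proof
    show "L (xh (Suc k), yh (Suc k)) \<le> L (x (Suc k), y (Suc k))" for k
      using step_extra[of k] by (auto simp: Let_def split: if_splits)
  qed (use assms in \<open>auto intro: less_imp_le\<close>)
  have "px (Suc k) = subgrad_x k" "py (Suc k) = subgrad_y k" if "1 \<le> k" for k
    using px_def[OF that] py_def[OF that] by (simp_all add: subgrad_x_def subgrad_y_def)
  moreover obtain \<rho> where "\<rho> > 0" "\<And>k. 1 \<le> k \<Longrightarrow>
      norm (subgrad_x k, subgrad_y k) \<le> \<rho> * norm (x (Suc k) - xh k, y (Suc k) - yh k)"
    using subgrad_norm_bound by blast
  ultimately show ?thesis
    using subgrad_in_limiting_subdiff by auto
qed

end
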